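(* Let $D$ be a strongly connected digraph with girth $g$ (having at least one cycle), $T$ a DFS tree of $D$ rooted at $r$, and $G$ the condensation graph of $D$ relative to $T$. Then $\chi_A(D)\le \chi(G)$.
   Context: Digraphs are finite and loopless; paths and cycles are directed; $l(\cdot)$ denotes length. Girth is the length of a shortest directed cycle. A DFS tree $T$ of a strongly connected digraph $D$ rooted at $r$ is the spanning out-branching produced by a depth-first search started at $r$. $P_u$ is the unique $ru$-path in $T$; the length $t$ of $T$ is the length of a longest path in $T$; the levels are $V_i=\{u: l(P_u)=i\}$, $0\le i\le t$. An arc $(u,v)$ is a backward arc if $T$ contains a $vu$-path. Let $k=\lceil\frac{t+1}{g-1}\rceil$ and $U_h=\bigcup_{j=0}^{g-2}V_{h(g-1)+j}$ for $h\in\{0,\ldots,k-1\}$, with $V_m=\emptyset$ for $m>t$. The condensation graph $G$ of $D$ relative to $T$ has vertex set $\{U_0,\ldots,U_{k-1}\}$, and for $i>j$, $U_iU_j$ is an edge iff there is a backward arc $(u,v)$ with $u\in U_i$ and $v\in U_j$. $\chi$ is the chromatic number; $\chi_A$ is the minimum number of colors in a vertex coloring whose color classes induce no directed cycle. *)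

theory Defs
  imports Complex_Main
begin

definition digraph :: "'a set \<Rightarrow> ('a \<times> 'a) set \<Rightarrow> bool" where
  "digraph V A \<longleftrightarrow> finite V \<and> A \<subseteq> V \<times> V \<and> (\<forall>v. (v, v) \<notin> A)"

definition strongly_connected :: "'a set \<Rightarrow> ('a \<times> 'a) set \<Rightarrow> bool" where
  "strongly_connected V A \<longleftrightarrow> (\<forall>u\<in>V. \<forall>v\<in>V. (u, v) \<in> A\<^sup>*)"

definition dcycle :: "('a \<times> 'a) set \<Rightarrow> 'a list \<Rightarrow> bool" where
  "dcycle A vs \<longleftrightarrow> vs \<noteq> [] \<and> distinct vs
     \<and> (\<forall>i. Suc i < length vs \<longrightarrow> (vs ! i, vs ! Suc i) \<in> A)
     \<and> (last vs, hd vs) \<in> A"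

definition girth :: "('a \<times> 'a) set \<Rightarrow> nat" where
  "girth A = (LEAST m. \<exists>vs. dcycle A vs \<and> length vs = m)"

text \<open>Depth-first search, as a nondeterministic process on states
  (stack, visited set, tree arcs).\<close>

inductive dfs_step :: "('a \<times> 'a) set \<Rightarrow> ('a list \<times> 'a set \<times> ('a \<times> 'a) set)
     \<Rightarrow> ('a list \<times> 'a set \<times> ('a \<times> 'a) set) \<Rightarrow> bool" for A where
  advance: "(u, v) \<in> A \<Longrightarrow> v \<notin> Vis \<Longrightarrow>
     dfs_step A (u # S, Vis, T) (v # u # S, insert v Vis, insert (u, v) T)"
| retreat: "(\<forall>v. (u, v) \<in> A \<longrightarrow> v \<in> Vis) \<Longrightarrow>
     dfs_step A (u # S, Vis, T) (S, Vis, T)"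

definition dfs_tree :: "'a set \<Rightarrow> ('a \<times> 'a) set \<Rightarrow> 'a \<Rightarrow> ('a \<times> 'a) set \<Rightarrow> bool" where
  "dfs_tree V A r T \<longleftrightarrow> r \<in> V \<and> (\<exists>Vis. (dfs_step A)\<^sup>*\<^sup>* ([r], {r}, {}) ([], Vis, T))"

definition depth :: "('a \<times> 'a) set \<Rightarrow> 'a \<Rightarrow> 'a \<Rightarrow> nat" where
  "depth T r u = (LEAST n. (r, u) \<in> T ^^ n)"

definition tree_length :: "'a set \<Rightarrow> ('a \<times> 'a) set \<Rightarrow> 'a \<Rightarrow> nat" where
  "tree_length V T r = Max (depth T r ` V)"

definition level :: "'a set \<Rightarrow> ('a \<times> 'a) set \<Rightarrow> 'a \<Rightarrow> nat \<Rightarrow> 'a set" where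
  "level V T r i = {u \<in> V. depth T r u = i}"

definition num_blocks :: "'a set \<Rightarrow> ('a \<times> 'a) set \<Rightarrow> 'a \<Rightarrow> nat \<Rightarrow> nat" where
  "num_blocks V T r g = nat \<lceil>real (tree_length V T r + 1) / real (g - 1)\<rceil>"

definition block :: "'a set \<Rightarrow> ('a \<times> 'a) set \<Rightarrow> 'a \<Rightarrow> nat \<Rightarrow> nat \<Rightarrow> 'a set" where
  "block V T r g h = (\<Union>j\<in>{0..g-2}. level V T r (h * (g - 1) + j))"

definition backward_arc :: "('a \<times> 'a) set \<Rightarrow> ('a \<times> 'a) set \<Rightarrow> 'a \<Rightarrow> 'a \<Rightarrow> bool" where
  "backward_arc A T u v \<longleftrightarrow> (u, v) \<in> A \<and> (v, u) \<in> T\<^sup>*"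

text \<open>Condensation graph: vertices U_0..U_(k-1) (represented by indices 0..k-1);
  for i > j, U_i U_j is an edge iff some backward arc goes from U_i to U_j.\<close>

definition cond_edge :: "'a set \<Rightarrow> ('a \<times> 'a) set \<Rightarrow> ('a \<times> 'a) set \<Rightarrow> 'a \<Rightarrow> nat \<Rightarrow> nat \<Rightarrow> nat \<Rightarrow> bool" where
  "cond_edge V A T r g i j \<longleftrightarrow> j < i \<and>
     (\<exists>u v. backward_arc A T u v \<and> u \<in> block V T r g i \<and> v \<in> block V T r g j)"

definition chromatic_number :: "'b set \<Rightarrow> ('b \<Rightarrow> 'b \<Rightarrow> bool) \<Rightarrow> nat" where
  "chromatic_number W E = (LEAST c. \<exists>f. f ` W \<subseteq> {0..<c} \<and>
      (\<forall>x\<in>W. \<forall>y\<in>W. E x y \<longrightarrow> f x \<noteq> f y))"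

definition cond_chromatic :: "'a set \<Rightarrow> ('a \<times> 'a) set \<Rightarrow> ('a \<times> 'a) set \<Rightarrow> 'a \<Rightarrow> nat \<Rightarrow> nat" where
  "cond_chromatic V A T r g =
     chromatic_number {0..<num_blocks V T r g} (cond_edge V A T r g)"

text \<open>Acyclic (dichromatic) number: fewest colours such that no directed cycle is
  monochromatic, i.e. every colour class induces an acyclic subdigraph.\<close>

definition dichromatic_number :: "'a set \<Rightarrow> ('a \<times> 'a) set \<Rightarrow> nat" where
  "dichromatic_number V A = (LEAST c. \<exists>f. f ` V \<subseteq> {0..<c} \<and>
      (\<forall>vs. dcycle A vs \<longrightarrow> \<not> (\<forall>x\<in>set vs. \<forall>y\<in>set vs. f x = f y)))"

end

theory Submission
  imports Defs
begin

text \<open>Colour each vertex with the colour, in an optimal colouring of the condensation graph, of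
  the block containing it. For a backward arc (u,v) the tree path from v to u closes a directed
  cycle, so depth u \<ge> depth v + g - 1 and u lies in a strictly later block than v: backward arcs
  join adjacent vertices of G and are never monochromatic. Every other arc leads to a vertex
  that the search finished earlier, so a monochromatic cycle would be a cycle along which
  finishing times strictly decrease.\<close>

lemma relpow_mono:
  fixes R S :: "('a \<times> 'a) set"
  shows "R \<subseteq> S \<Longrightarrow> (x, y) \<in> R ^^ n \<Longrightarrow> (x, y) \<in> S ^^ n"
proof (induction n arbitrary: y)
  case (Suc n)
  then obtain z where "(x, z) \<in> R ^^ n" "(z, y) \<in> R" by auto
  then show ?case using Suc by auto
qed simp

lemma relpow_Suc_walk:
  "(x, y) \<in> A ^^ Suc m \<Longrightarrow> \<exists>vs. length vs = Suc m \<and> hd vs = x \<and>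
     (\<forall>i. Suc i < length vs \<longrightarrow> (vs ! i, vs ! Suc i) \<in> A) \<and> (last vs, y) \<in> A"
proof (induction m arbitrary: x)
  case 0 then show ?case by (intro exI[of _ "[x]"]) auto
next
  case (Suc m)
  from relpow_Suc_D2[OF Suc.prems] obtain z where z: "(x, z) \<in> A" "(z, y) \<in> A ^^ Suc m" by blast
  from Suc.IH[OF z(2)] obtain ws where ws: "length ws = Suc m" "hd ws = z"
    "\<forall>i. Suc i < length ws \<longrightarrow> (ws ! i, ws ! Suc i) \<in> A" "(last ws, y) \<in> A" by blast
  have "\<forall>i. Suc i < length (x # ws) \<longrightarrow> ((x # ws) ! i, (x # ws) ! Suc i) \<in> A"
  proof (intro allI impI)
    fix i assume i: "Suc i < length (x # ws)"
    show "((x # ws) ! i, (x # ws) ! Suc i) \<in> A"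
      using ws z i by (cases i; cases ws) auto
  qed
  then show ?case using ws by (intro exI[of _ "x # ws"]) auto
qed

text \<open>A repeated vertex v_i = v_j with i < j splits off the shorter closed walk v_i ... v_(j-1).\<close>

lemma closed_walk_imp_dcycle:
  "vs \<noteq> [] \<Longrightarrow> (\<forall>i. Suc i < length vs \<longrightarrow> (vs ! i, vs ! Suc i) \<in> A) \<Longrightarrow> (last vs, hd vs) \<in> A
   \<Longrightarrow> \<exists>cs. dcycle A cs \<and> length cs \<le> length vs"
proof (induction "length vs" arbitrary: vs rule: less_induct)
  case less
  show ?case
  proof (cases "distinct vs")
    case True then show ?thesis using less.prems unfolding dcycle_def by blast
  next
    case False
    then obtain i j where ij: "i < j" "j < length vs" "vs ! i = vs ! j"
      by (metis distinct_conv_nth linorder_neqE_nat)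
    define ws where "ws = take (j - i) (drop i vs)"
    have lw: "length ws = j - i" using ij by (simp add: ws_def)
    have wn: "\<And>k. k < j - i \<Longrightarrow> ws ! k = vs ! (i + k)" using ij by (simp add: ws_def)
    have ne: "ws \<noteq> []" using lw ij by auto
    have ch: "\<forall>k. Suc k < length ws \<longrightarrow> (ws ! k, ws ! Suc k) \<in> A"
    proof (intro allI impI)
      fix k assume "Suc k < length ws"
      then have k: "Suc k < j - i" using lw by simp
      have "(vs ! (i + k), vs ! Suc (i + k)) \<in> A" using less.prems(2) k ij by auto
      then show "(ws ! k, ws ! Suc k) \<in> A" using wn[of k] wn[of "Suc k"] k by simp
    qed
    have "last ws = vs ! (j - 1)" "hd ws = vs ! j"
      using ne lw wn ij by (simp_all add: last_conv_nth hd_conv_nth)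
    moreover have "(vs ! (j - 1), vs ! j) \<in> A" using less.prems(2) ij
      by (metis Suc_diff_1 gr_implies_not0 not_gr_zero)
    ultimately have cl: "(last ws, hd ws) \<in> A" by simp
    have "length ws < length vs" using lw ij by auto
    with less.hyps[OF this ne ch cl] show ?thesis by auto
  qed
qed

lemma girth_le_closed_walk:
  assumes "(x, x) \<in> A ^^ Suc n"
  shows "girth A \<le> Suc n"
proof -
  obtain vs where "length vs = Suc n" "hd vs = x"
      "\<forall>i. Suc i < length vs \<longrightarrow> (vs ! i, vs ! Suc i) \<in> A" "(last vs, x) \<in> A"
    using relpow_Suc_walk[OF assms] by blast
  then obtain cs where "dcycle A cs" "length cs \<le> Suc n"
    using closed_walk_imp_dcycle[of vs A] by force
  then have "girth A \<le> length cs"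
    unfolding girth_def by (blast intro: Least_le)
  with \<open>length cs \<le> Suc n\<close> show ?thesis by simp
qed

lemma girth_ge_2:
  assumes "\<forall>v. (v, v) \<notin> A" and "dcycle A vs"
  shows "2 \<le> girth A"
proof -
  obtain cs where cs: "dcycle A cs" "length cs = girth A"
    using LeastI_ex[of "\<lambda>m. \<exists>vs. dcycle A vs \<and> length vs = m"] assms(2)
    unfolding girth_def by blast
  have "length cs \<noteq> 1"
  proof
    assume "length cs = 1"
    then obtain a where "cs = [a]" by (cases cs) auto
    then show False using cs(1) assms(1) unfolding dcycle_def by auto
  qed
  moreover have "length cs \<noteq> 0" using cs(1) unfolding dcycle_def by auto
  ultimately show ?thesis using cs(2) by linarith
qed

lemma dcycle_set_subset:
  assumes "dcycle A vs" and "A \<subseteq> V \<times> V"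
  shows "set vs \<subseteq> V"
proof
  fix x assume "x \<in> set vs"
  then obtain i where i: "i < length vs" "x = vs ! i" by (auto simp: in_set_conv_nth)
  show "x \<in> V"
  proof (cases "Suc i < length vs")
    case True then show ?thesis using assms i unfolding dcycle_def by blast
  next
    case False
    then have "i = length vs - 1" using i by linarith
    moreover have "vs \<noteq> []" using i by auto
    ultimately have "x = last vs" using i by (simp add: last_conv_nth)
    then show ?thesis using assms unfolding dcycle_def by blast
  qed
qed

lemma dcycle_not_rank_decreasing:
  fixes rank :: "'a \<Rightarrow> nat"
  assumes "dcycle A vs"
  shows "\<exists>x\<in>set vs. \<exists>y\<in>set vs. (x, y) \<in> A \<and> rank x \<le> rank y"
proof (rule ccontr)
  assume dec: "\<not> ?thesis"
  have ne: "vs \<noteq> []" and ch: "\<forall>i. Suc i < length vs \<longrightarrow> (vs ! i, vs ! Suc i) \<in> A"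
    and cl: "(last vs, hd vs) \<in> A" using assms by (auto simp: dcycle_def)
  have le: "i < length vs \<Longrightarrow> rank (vs ! i) \<le> rank (vs ! 0)" for i
  proof (induction i)
    case (Suc i)
    then have "rank (vs ! Suc i) < rank (vs ! i)" using ch dec by (meson Suc_lessD not_le nth_mem)
    then show ?case using Suc by auto
  qed simp
  have "rank (hd vs) < rank (last vs)" using cl dec ne by (meson hd_in_set last_in_set not_le)
  moreover have "rank (last vs) \<le> rank (hd vs)" using le[of "length vs - 1"] ne
    by (simp add: last_conv_nth hd_conv_nth)
  ultimately show False by simp
qed

definition unique_parents :: "('a \<times> 'a) set \<Rightarrow> 'a \<Rightarrow> bool" where
  "unique_parents T r \<longleftrightarrow>
     (\<forall>x. (x, r) \<notin> T) \<and> (\<forall>x x' y. (x, y) \<in> T \<longrightarrow> (x', y) \<in> T \<longrightarrow> x = x')"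

lemma unique_parents_relpow_unique:
  assumes "unique_parents T r"
  shows "(r, y) \<in> T ^^ m \<Longrightarrow> (r, y) \<in> T ^^ m' \<Longrightarrow> m = m'"
proof (induction m arbitrary: y m')
  case 0
  then show ?case using assms by (cases m') (auto simp: unique_parents_def)
next
  case (Suc k)
  from Suc.prems(1) obtain z where z: "(r, z) \<in> T ^^ k" "(z, y) \<in> T" by auto
  show ?case
  proof (cases m')
    case 0 then show ?thesis using Suc.prems z assms by (auto simp: unique_parents_def)
  next
    case (Suc k')
    then obtain z' where z': "(r, z') \<in> T ^^ k'" "(z', y) \<in> T" using Suc.prems(2) by auto
    then have "z' = z" using z assms by (auto simp: unique_parents_def)
    then show ?thesis using Suc.IH z z' Suc by auto
  qed
qed

lemma depth_eqI:
  assumes "unique_parents T r" and "(r, u) \<in> T ^^ m"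
  shows "depth T r u = m"
  unfolding depth_def
  using assms unique_parents_relpow_unique[OF assms(1)] by (blast intro: Least_equality)

text \<open>Here rank is the order in which vertices are popped off the stack (N exceeds every rank
  so far): a popped vertex has all out-neighbours visited, and each of its arcs is backward or
  leads to a vertex popped before it.\<close>

definition finish_ranked :: "('a \<times> 'a) set \<Rightarrow> ('a \<times> 'a) set \<Rightarrow> 'a list \<Rightarrow> 'a set \<Rightarrow> bool" where
  "finish_ranked A T S Vis \<longleftrightarrow> (\<exists>(rank :: 'a \<Rightarrow> nat) N. \<forall>w \<in> Vis - set S. rank w < N \<and>
     (\<forall>v. (w, v) \<in> A \<longrightarrow> v \<in> Vis \<and> ((v, w) \<in> T\<^sup>* \<or> v \<notin> set S \<and> rank v < rank w)))"

definition dfs_inv :: "'a set \<Rightarrow> ('a \<times> 'a) set \<Rightarrow> 'a \<Rightarrow> 'a list \<times> 'a set \<times> ('a \<times> 'a) set \<Rightarrow> bool" where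
  "dfs_inv V A r = (\<lambda>(S, Vis, T).
     r \<in> Vis \<and> Vis \<subseteq> V \<and> set S \<subseteq> Vis \<and> distinct S \<and> T \<subseteq> A \<and> snd ` T \<subseteq> Vis \<and>
     (\<forall>w\<in>Vis. (r, w) \<in> T\<^sup>*) \<and> unique_parents T r \<and>
     sorted_wrt (\<lambda>a b. (b, a) \<in> T\<^sup>*) S \<and> finish_ranked A T S Vis)"

lemma finish_ranked_advance:
  assumes "finish_ranked A T (u # S) Vis" and "v \<notin> Vis"
  shows "finish_ranked A (insert (u, v) T) (v # u # S) (insert v Vis)"
proof -
  obtain rank :: "'a \<Rightarrow> nat" and N where R: "\<forall>w \<in> Vis - set (u # S). rank w < N \<and>
      (\<forall>v'. (w, v') \<in> A \<longrightarrow> v' \<in> Vis \<and> ((v', w) \<in> T\<^sup>* \<or> v' \<notin> set (u # S) \<and> rank v' < rank w))"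
    using assms(1) unfolding finish_ranked_def by blast
  have "T\<^sup>* \<subseteq> (insert (u, v) T)\<^sup>*" by (rule rtrancl_mono) auto
  moreover have "insert v Vis - set (v # u # S) = Vis - set (u # S)" using assms(2) by auto
  moreover have "v' \<noteq> v" if "v' \<in> Vis" for v' using that assms(2) by blast
  ultimately have "\<forall>w \<in> insert v Vis - set (v # u # S). rank w < N \<and> (\<forall>v'. (w, v') \<in> A \<longrightarrow>
      v' \<in> insert v Vis \<and> ((v', w) \<in> (insert (u, v) T)\<^sup>* \<or> v' \<notin> set (v # u # S) \<and> rank v' < rank w))"
    using R by (simp only:) blast
  then show ?thesis unfolding finish_ranked_def by blast
qed

lemma finish_ranked_retreat:
  assumes "finish_ranked A T (u # S) Vis" and "(u, u) \<notin> A"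
    and "\<forall>v. (u, v) \<in> A \<longrightarrow> v \<in> Vis" and "\<forall>v\<in>set S. (v, u) \<in> T\<^sup>*"
  shows "finish_ranked A T S Vis"
proof -
  obtain rank :: "'a \<Rightarrow> nat" and N where R: "\<forall>w \<in> Vis - set (u # S). rank w < N \<and>
      (\<forall>v. (w, v) \<in> A \<longrightarrow> v \<in> Vis \<and> ((v, w) \<in> T\<^sup>* \<or> v \<notin> set (u # S) \<and> rank v < rank w))"
    using assms(1) unfolding finish_ranked_def by blast
  let ?rank = "rank(u := N)"
  have "?rank w < Suc N \<and>
      (\<forall>v. (w, v) \<in> A \<longrightarrow> v \<in> Vis \<and> ((v, w) \<in> T\<^sup>* \<or> v \<notin> set S \<and> ?rank v < ?rank w))"
    if w: "w \<in> Vis - set S" for w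
  proof (cases "w = u")
    case True
    have "v \<in> Vis \<and> ((v, u) \<in> T\<^sup>* \<or> v \<notin> set S \<and> ?rank v < ?rank u)" if uv: "(u, v) \<in> A" for v
    proof (cases "v \<in> set S")
      case False
      moreover have "v \<noteq> u" using uv assms(2) by blast
      moreover have "v \<in> Vis" using uv assms(3) by blast
      ultimately have "v \<in> Vis - set (u # S)" by simp
      then have "rank v < N" using R by blast
      with \<open>v \<noteq> u\<close> \<open>v \<in> Vis\<close> False show ?thesis by simp
    qed (use uv assms(3,4) in blast)
    then show ?thesis using True by simp
  next
    case False
    then have "w \<in> Vis - set (u # S)" using w by simp
    then have "rank w < N"
      and "\<forall>v. (w, v) \<in> A \<longrightarrow> v \<in> Vis \<and> ((v, w) \<in> T\<^sup>* \<or> v \<notin> set (u # S) \<and> rank v < rank w)"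
      using R by blast+
    with False show ?thesis by auto
  qed
  then show ?thesis
    unfolding finish_ranked_def by (intro exI[of _ ?rank] exI[of _ "Suc N"]) blast
qed

lemma dfs_inv_step:
  assumes "dfs_step A s s'" and "dfs_inv V A r s" and "A \<subseteq> V \<times> V" and "\<forall>v. (v, v) \<notin> A"
  shows "dfs_inv V A r s'"
  using assms(1)
proof cases
  case (advance u v Vis S T)
  let ?T = "insert (u, v) T"
  have I: "r \<in> Vis" "Vis \<subseteq> V" "set (u # S) \<subseteq> Vis" "distinct (u # S)" "T \<subseteq> A" "snd ` T \<subseteq> Vis"
    "\<forall>w\<in>Vis. (r, w) \<in> T\<^sup>*" "unique_parents T r" "sorted_wrt (\<lambda>a b. (b, a) \<in> T\<^sup>*) (u # S)"
    "finish_ranked A T (u # S) Vis"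
    using assms(2) advance unfolding dfs_inv_def by auto
  have mono: "T\<^sup>* \<subseteq> ?T\<^sup>*" by (rule rtrancl_mono) auto
  have "sorted_wrt (\<lambda>a b. (b, a) \<in> ?T\<^sup>*) (u # S)"
    by (rule sorted_wrt_mono_rel[OF _ I(9)]) (use mono in blast)
  moreover have "(u, v) \<in> ?T\<^sup>*" by auto
  ultimately have sorted: "sorted_wrt (\<lambda>a b. (b, a) \<in> ?T\<^sup>*) (v # u # S)"
    by (auto intro: rtrancl_trans)
  have "(r, u) \<in> ?T\<^sup>*" using I(3,7) mono by auto
  then have reach: "\<forall>w\<in>insert v Vis. (r, w) \<in> ?T\<^sup>*"
    using I(7) mono by (auto intro: rtrancl_into_rtrancl)
  have parents: "unique_parents ?T r"
    using I(1,6,8) advance(4) unfolding unique_parents_def by force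
  have "v \<in> V" using advance(3) assms(3) by blast
  then have "insert v Vis \<subseteq> V" "set (v # u # S) \<subseteq> insert v Vis" "distinct (v # u # S)"
    "?T \<subseteq> A" "snd ` ?T \<subseteq> insert v Vis"
    using I(2-6) advance(3,4) by auto
  then show ?thesis
    unfolding advance dfs_inv_def prod.case
    using I(1) sorted reach parents finish_ranked_advance[OF I(10) advance(4)] by blast
next
  case (retreat u Vis S T)
  have I: "r \<in> Vis" "Vis \<subseteq> V" "set (u # S) \<subseteq> Vis" "distinct (u # S)" "T \<subseteq> A" "snd ` T \<subseteq> Vis"
    "\<forall>w\<in>Vis. (r, w) \<in> T\<^sup>*" "unique_parents T r" "sorted_wrt (\<lambda>a b. (b, a) \<in> T\<^sup>*) (u # S)"
    "finish_ranked A T (u # S) Vis"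
    using assms(2) retreat unfolding dfs_inv_def by auto
  have "finish_ranked A T S Vis"
    using finish_ranked_retreat[OF I(10)] assms(4) retreat(3) I(9) by simp
  moreover have "set S \<subseteq> Vis" "distinct S" "sorted_wrt (\<lambda>a b. (b, a) \<in> T\<^sup>*) S"
    using I(3,4,9) by auto
  ultimately show ?thesis
    unfolding retreat dfs_inv_def prod.case using I by blast
qed

lemma dfs_tree_structure:
  assumes "digraph V A" and "strongly_connected V A" and "dfs_tree V A r T"
  shows "T \<subseteq> A" and "unique_parents T r" and "\<forall>u\<in>V. (r, u) \<in> T\<^sup>*"
    and "\<exists>rank :: 'a \<Rightarrow> nat. \<forall>(u, v) \<in> A. (v, u) \<in> T\<^sup>* \<or> rank v < rank u"
proof -
  have AV: "A \<subseteq> V \<times> V" and loopless: "\<forall>v. (v, v) \<notin> A"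
    using assms(1) by (auto simp: digraph_def)
  obtain Vis where run: "(dfs_step A)\<^sup>*\<^sup>* ([r], {r}, {}) ([], Vis, T)" and rV: "r \<in> V"
    using assms(3) by (auto simp: dfs_tree_def)
  have "dfs_inv V A r ([r], {r}, {})"
    using rV by (auto simp: dfs_inv_def unique_parents_def finish_ranked_def)
  with run have "dfs_inv V A r ([], Vis, T)"
    by (induction rule: rtranclp_induct) (auto intro: dfs_inv_step[OF _ _ AV loopless])
  then have inv: "r \<in> Vis" "Vis \<subseteq> V" "T \<subseteq> A" "\<forall>w\<in>Vis. (r, w) \<in> T\<^sup>*" "unique_parents T r"
    and "finish_ranked A T [] Vis"
    unfolding dfs_inv_def by auto
  then obtain rank :: "'a \<Rightarrow> nat" where
    rank: "\<forall>w\<in>Vis. \<forall>v. (w, v) \<in> A \<longrightarrow> v \<in> Vis \<and> ((v, w) \<in> T\<^sup>* \<or> rank v < rank w)"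
    unfolding finish_ranked_def by (simp del: Diff_iff) blast
  have "V \<subseteq> Vis"
  proof
    fix x assume "x \<in> V"
    then have "(r, x) \<in> A\<^sup>*" using assms(2) rV by (auto simp: strongly_connected_def)
    then show "x \<in> Vis" by induction (use inv(1) rank in auto)
  qed
  with inv(2) have "Vis = V" by auto
  with inv show "T \<subseteq> A" "unique_parents T r" "\<forall>u\<in>V. (r, u) \<in> T\<^sup>*" by auto
  have "(v, u) \<in> T\<^sup>* \<or> rank v < rank u" if uv: "(u, v) \<in> A" for u v
  proof -
    have "u \<in> Vis" using uv AV \<open>Vis = V\<close> by blast
    with uv rank show ?thesis by blast
  qed
  then show "\<exists>rank :: 'a \<Rightarrow> nat. \<forall>(u, v) \<in> A. (v, u) \<in> T\<^sup>* \<or> rank v < rank u"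
    by (intro exI[of _ rank]) auto
qed

lemma dfs_tree_dcycle_backward_arc:
  assumes "digraph V A" and "strongly_connected V A" and "dfs_tree V A r T" and "dcycle A vs"
  shows "\<exists>x\<in>set vs. \<exists>y\<in>set vs. backward_arc A T x y"
proof -
  obtain rank :: "'a \<Rightarrow> nat" where rank: "\<forall>(u, v) \<in> A. (v, u) \<in> T\<^sup>* \<or> rank v < rank u"
    using dfs_tree_structure(4)[OF assms(1-3)] by blast
  obtain x y where "x \<in> set vs" "y \<in> set vs" "(x, y) \<in> A" "rank x \<le> rank y"
    using dcycle_not_rank_decreasing[OF assms(4)] by blast
  with bspec[OF rank] show ?thesis unfolding backward_arc_def by fastforce
qed

lemma depth_backward_arc:
  assumes "unique_parents T r" and "T \<subseteq> A" and "(r, y) \<in> T\<^sup>*" and "backward_arc A T x y"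
  shows "depth T r y + (girth A - 1) \<le> depth T r x"
proof -
  obtain n where n: "(y, x) \<in> T ^^ n"
    using assms(4) unfolding backward_arc_def rtrancl_power by blast
  obtain m where m: "(r, y) \<in> T ^^ m"
    using assms(3) unfolding rtrancl_power by blast
  have "(r, x) \<in> T ^^ (m + n)" unfolding relpow_add using m n by (rule relcompI)
  then have "depth T r x = m + n" by (rule depth_eqI[OF assms(1)])
  moreover have "depth T r y = m" by (rule depth_eqI[OF assms(1) m])
  moreover have "(x, x) \<in> A ^^ Suc n"
    using assms(4) relpow_mono[OF assms(2) n] unfolding backward_arc_def
    by (blast intro: relpow_Suc_I2)
  then have "girth A \<le> Suc n" by (rule girth_le_closed_walk)
  ultimately show ?thesis by linarith
qed

lemma block_eq_depth_div:
  assumes "2 \<le> g"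
  shows "block V T r g h = {x \<in> V. depth T r x div (g - 1) = h}"
proof (intro set_eqI iffI)
  fix x assume "x \<in> block V T r g h"
  then obtain j where "x \<in> V" "j < g - 1" "depth T r x = h * (g - 1) + j"
    using assms unfolding block_def level_def by fastforce
  then show "x \<in> {x \<in> V. depth T r x div (g - 1) = h}" by simp
next
  fix x assume x: "x \<in> {x \<in> V. depth T r x div (g - 1) = h}"
  have "depth T r x mod (g - 1) < g - 1" using assms by simp
  then have "depth T r x mod (g - 1) \<in> {0..g - 2}" by simp
  moreover have "depth T r x = h * (g - 1) + depth T r x mod (g - 1)"
    using x div_mult_mod_eq[of "depth T r x" "g - 1"] by simp
  ultimately show "x \<in> block V T r g h" using x unfolding block_def level_def by blast
qed

lemma depth_div_less_num_blocks:
  assumes "finite V" and "x \<in> V" and "2 \<le> g"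
  shows "depth T r x div (g - 1) < num_blocks V T r g"
proof -
  define t where "t = tree_length V T r"
  have "depth T r x \<le> t"
    unfolding t_def tree_length_def using assms(1,2) by simp
  then have "real (depth T r x div (g - 1)) * real (g - 1) < real (t + 1)"
    by (metis div_times_less_eq_dividend le_imp_less_Suc Suc_eq_plus1 order_le_less_trans
        of_nat_less_iff of_nat_mult)
  then have "real (depth T r x div (g - 1)) < real (t + 1) / real (g - 1)"
    using assms(3) by (simp add: pos_less_divide_eq)
  also have "\<dots> \<le> of_int \<lceil>real (t + 1) / real (g - 1)\<rceil>" by (rule le_of_int_ceiling)
  finally show ?thesis unfolding num_blocks_def t_def by linarith
qed

lemma backward_arc_cond_edge:
  assumes "A \<subseteq> V \<times> V" and "unique_parents T r" and "T \<subseteq> A" and "\<forall>u\<in>V. (r, u) \<in> T\<^sup>*"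
    and "2 \<le> girth A" and "backward_arc A T x y"
  shows "cond_edge V A T r (girth A) (depth T r x div (girth A - 1)) (depth T r y div (girth A - 1))"
proof -
  let ?q = "girth A - 1"
  have V: "x \<in> V" "y \<in> V" using assms(1,6) unfolding backward_arc_def by auto
  then have "depth T r y + ?q \<le> depth T r x"
    using depth_backward_arc[OF assms(2,3) _ assms(6)] assms(4) by blast
  then have "(depth T r y + ?q) div ?q \<le> depth T r x div ?q" by (rule div_le_mono)
  moreover have "(depth T r y + ?q) div ?q = depth T r y div ?q + 1"
    using assms(5) by (intro div_add_self2) simp
  ultimately have "depth T r y div ?q < depth T r x div ?q" by linarith
  then show ?thesis
    unfolding cond_edge_def block_eq_depth_div[OF assms(5)] using assms(6) V by blast
qed

lemma chromatic_number_colouringE: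
  assumes "finite W" and "\<forall>x\<in>W. \<not> E x x"
  obtains f where "f ` W \<subseteq> {0..<chromatic_number W E}"
    and "\<forall>x\<in>W. \<forall>y\<in>W. E x y \<longrightarrow> f x \<noteq> f y"
proof -
  obtain h where h: "bij_betw h W {0..<card W}" using ex_bij_betw_finite_nat[OF assms(1)] by blast
  have "h x \<noteq> h y" if "x \<in> W" "y \<in> W" "E x y" for x y
  proof
    assume "h x = h y"
    with h that(1,2) have "x = y" unfolding bij_betw_def by (blast dest: inj_onD)
    with that assms(2) show False by blast
  qed
  moreover have "h ` W \<subseteq> {0..<card W}" using h by (simp add: bij_betw_def)
  ultimately have "\<exists>f. f ` W \<subseteq> {0..<card W} \<and> (\<forall>x\<in>W. \<forall>y\<in>W. E x y \<longrightarrow> f x \<noteq> f y)"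
    by blast
  then have "\<exists>f. f ` W \<subseteq> {0..<chromatic_number W E} \<and> (\<forall>x\<in>W. \<forall>y\<in>W. E x y \<longrightarrow> f x \<noteq> f y)"
    unfolding chromatic_number_def by (rule LeastI)
  with that show ?thesis by blast
qed

theorem mainTheorem18:
  fixes V :: "'a set" and A :: "('a \<times> 'a) set" and r :: 'a and T :: "('a \<times> 'a) set"
  assumes "digraph V A"
    and "strongly_connected V A"
    and "\<exists>vs. dcycle A vs"
    and "g = girth A"
    and "dfs_tree V A r T"
  shows "dichromatic_number V A \<le> cond_chromatic V A T r g"
proof -
  have fin: "finite V" and AV: "A \<subseteq> V \<times> V" and loopless: "\<forall>v. (v, v) \<notin> A"
    using assms(1) by (auto simp: digraph_def)
  note tree = dfs_tree_structure[OF assms(1,2,5)]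
  have g2: "2 \<le> g" using girth_ge_2[OF loopless] assms(3,4) by blast
  define blk where "blk x = depth T r x div (g - 1)" for x
  let ?k = "num_blocks V T r g"
  have "\<forall>i\<in>{0..<?k}. \<not> cond_edge V A T r g i i" by (simp add: cond_edge_def)
  then obtain f where f_range: "f ` {0..<?k} \<subseteq> {0..<cond_chromatic V A T r g}"
    and f_proper: "\<forall>i\<in>{0..<?k}. \<forall>j\<in>{0..<?k}. cond_edge V A T r g i j \<longrightarrow> f i \<noteq> f j"
    unfolding cond_chromatic_def by (rule chromatic_number_colouringE[rotated]) simp_all
  have blk_less: "blk x < ?k" if "x \<in> V" for x
    unfolding blk_def using depth_div_less_num_blocks[OF fin that g2] .
  have "(f \<circ> blk) ` V \<subseteq> {0..<cond_chromatic V A T r g}"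
    using f_range blk_less by fastforce
  moreover have "\<exists>x\<in>set vs. \<exists>y\<in>set vs. (f \<circ> blk) x \<noteq> (f \<circ> blk) y"
    if cycle: "dcycle A vs" for vs
  proof -
    obtain x y where xy: "x \<in> set vs" "y \<in> set vs" "backward_arc A T x y"
      using dfs_tree_dcycle_backward_arc[OF assms(1,2,5) cycle] by blast
    then have "cond_edge V A T r g (blk x) (blk y)"
      using backward_arc_cond_edge[OF AV tree(2,1,3)] g2 assms(4) unfolding blk_def by simp
    moreover have "x \<in> V" "y \<in> V" using xy dcycle_set_subset[OF cycle AV] by auto
    ultimately have "f (blk x) \<noteq> f (blk y)" using f_proper blk_less by simp
    with xy(1,2) show ?thesis by auto
  qed
  ultimately show ?thesis
    unfolding dichromatic_number_def by (intro Least_le exI[of _ "f \<circ> blk"]) blast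
qed

end
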